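(* Let $n\ge 2$ and let $\alpha,\beta,x$ be independent random variables, each uniformly distributed on $\{0,\dots,2^n-1\}$. Let $c_i$ be the carry bit entering position $i$ of $\alpha+x$ (so $c_0=0$, $c_{i+1}=\mathrm{maj}(x_i,\alpha_i,c_i)$), and let $\tilde y=((\alpha\dotplus x)\oplus(\beta\dotplus x))\oplus\alpha\oplus\beta=\sum_{i=0}^{n-1}\tilde y_i2^i$. Then for every $i=0,\dots,n-1$, $$\Pr(c_i=1)=\frac{2^i-1}{2^{i+1}},\qquad \Pr(\tilde y_i=0)=\frac23+\frac{1}{3\cdot 4^i}.$$
   Context: $a\dotplus b=(a+b)\bmod 2^n$; $\oplus$ is bitwise XOR; $\mathrm{maj}(p,q,r)=(pq)\oplus(pr)\oplus(qr)$; $x_i,\alpha_i$ denote the $i$-th binary digits (bit $0$ least significant). *)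

theory Defs
  imports "HOL-Probability.Probability"
begin

definition maj :: "bool \<Rightarrow> bool \<Rightarrow> bool \<Rightarrow> bool" where
  "maj p q r = (((p \<and> q) \<noteq> (p \<and> r)) \<noteq> (q \<and> r))"

fun carry :: "nat \<Rightarrow> nat \<Rightarrow> nat \<Rightarrow> bool" where
  "carry a x 0 = False"
| "carry a x (Suc i) = maj (bit x i) (bit a i) (carry a x i)"

definition addmod :: "nat \<Rightarrow> nat \<Rightarrow> nat \<Rightarrow> nat" where
  "addmod n a b = (a + b) mod 2 ^ n"

definition ytilde :: "nat \<Rightarrow> nat \<Rightarrow> nat \<Rightarrow> nat \<Rightarrow> nat" where
  "ytilde n a b x = xor (xor (xor (addmod n a x) (addmod n b x)) a) b"

definition unif :: "nat \<Rightarrow> nat pmf" where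
  "unif n = pmf_of_set {0..<2 ^ n}"

end

theory Submission
  imports Defs
begin

(* The proof has three layers.
   (1) Bit arithmetic: the carry entering position i of a + x is set exactly when the
       low i bits of a and x overflow, i.e. 2^i <= a mod 2^i + x mod 2^i.  Hence bit i of
       a + x is a_i xor x_i xor c_i, and bit i of ytilde is the xor of the two carries
       c_i(a,x) and c_i(b,x).
   (2) Reduction to i-bit words: the low i bits of a uniform n-bit word are uniform on
       i bits, so both events have the probability they have for a, b, x uniform
       on {0..<N}, N = 2^i, where the carry condition reads N <= a + x.
   (3) Counting on {0..<N}^3: for fixed x exactly x values of a give a carry, so there are
       N * (0 + ... + (N-1)) carry triples and sum_x (x^2 + (N-x)^2) = N(2N^2+1)/3 triples
       in which the two carries agree. *)

(* One step of the carry recursion in arithmetic form: with low parts A, X < N and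
   next digits p, q, the majority of (q, p, carry) is the overflow of the wider sums. *)
lemma maj_carry_step:
  fixes N A X p q :: nat
  assumes "A < N" "X < N" "p \<le> 1" "q \<le> 1"
  shows "maj (q = 1) (p = 1) (N \<le> A + X) \<longleftrightarrow> 2 * N \<le> (N * p + A) + (N * q + X)"
  using assms by (cases p; cases q) (auto simp: maj_def)

lemma carry_iff_low_sum: "carry a x i \<longleftrightarrow> 2 ^ i \<le> a mod 2 ^ i + x mod 2 ^ i"
proof (induction i)
  case 0
  show ?case by simp
next
  case (Suc i)
  have "a mod 2 ^ Suc i = 2 ^ i * (a div 2 ^ i mod 2) + a mod 2 ^ i"
    and "x mod 2 ^ Suc i = 2 ^ i * (x div 2 ^ i mod 2) + x mod 2 ^ i"
    by (simp_all only: power_Suc2 mod_mult2_eq)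
  moreover have "bit a i \<longleftrightarrow> a div 2 ^ i mod 2 = 1" "bit x i \<longleftrightarrow> x div 2 ^ i mod 2 = 1"
    by (simp_all add: bit_nat_def odd_iff_mod_2_eq_one)
  ultimately show ?case
    using maj_carry_step[of "a mod 2 ^ i" "2 ^ i" "x mod 2 ^ i" "a div 2 ^ i mod 2" "x div 2 ^ i mod 2"]
    by (simp add: Suc mult.commute)
qed

lemma bit_add_carry: "bit (a + x) i \<longleftrightarrow> (bit a i \<noteq> (bit x i \<noteq> carry a x i))"
proof -
  have "a mod 2 ^ i < 2 ^ i" "x mod 2 ^ i < 2 ^ i" by simp_all
  then have "a mod 2 ^ i + x mod 2 ^ i < 2 * 2 ^ i" by linarith
  then have "(a mod 2 ^ i + x mod 2 ^ i) div 2 ^ i = of_bool (carry a x i)"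
    unfolding carry_iff_low_sum by (cases "2 ^ i \<le> a mod 2 ^ i + x mod 2 ^ i") (simp_all add: div_nat_eqI)
  then have "(a + x) div 2 ^ i = a div 2 ^ i + x div 2 ^ i + of_bool (carry a x i)"
    by (simp only: div_add1_eq[of a x "2 ^ i"])
  then show ?thesis
    by (simp add: bit_nat_def) blast
qed

(* The masking by xor with a and b leaves exactly the difference of the two carries. *)
lemma bit_ytilde:
  assumes "i < n"
  shows "bit (ytilde n a b x) i \<longleftrightarrow> carry a x i \<noteq> carry b x i"
  using assms unfolding ytilde_def addmod_def
  by (simp add: bit_xor_iff take_bit_eq_mod[symmetric] bit_take_bit_iff bit_add_carry) argo

lemma carry_column_card:
  fixes N x :: nat
  assumes "x \<le> N"
  shows "card ({..<N} \<inter> {a. N \<le> a + x}) = x"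
    and "card ({..<N} \<inter> {a. \<not> N \<le> a + x}) = N - x"
proof -
  have "{..<N} \<inter> {a. N \<le> a + x} = {N - x..<N}" "{..<N} \<inter> {a. \<not> N \<le> a + x} = {..<N - x}"
    using assms by auto
  then show "card ({..<N} \<inter> {a. N \<le> a + x}) = x" "card ({..<N} \<inter> {a. \<not> N \<le> a + x}) = N - x"
    using assms by simp_all
qed

lemma count_agreements_pair:
  fixes A :: "'a set"
  assumes "finite A"
  shows "(\<Sum>a\<in>A. \<Sum>b\<in>A. of_bool (Q a = Q b)) = card (A \<inter> {a. Q a}) ^ 2 + card (A \<inter> {a. \<not> Q a}) ^ 2"
proof -
  have "(\<Sum>b\<in>A. of_bool (Q a = Q b)) = (if Q a then card (A \<inter> {b. Q b}) else card (A \<inter> {b. \<not> Q b}))" for a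
    using assms by simp
  then have "(\<Sum>a\<in>A. \<Sum>b\<in>A. of_bool (Q a = Q b))
      = (\<Sum>a\<in>A. if Q a then card (A \<inter> {b. Q b}) else card (A \<inter> {b. \<not> Q b}))"
    by simp
  also have "\<dots> = card (A \<inter> {a. Q a}) ^ 2 + card (A \<inter> {a. \<not> Q a}) ^ 2"
    using assms by (simp add: sum.If_cases power2_eq_square Compl_eq)
  finally show ?thesis .
qed

lemma sum_squares_consecutive:
  fixes N :: nat
  shows "3 * (\<Sum>x<N. x ^ 2 + (x + 1) ^ 2) = N * (2 * N * N + 1)"
  by (induction N) (simp_all add: algebra_simps power2_eq_square)

(* Gauss' formula, stated without subtraction. *)
lemma gauss_sum_double:
  fixes N :: nat
  shows "2 * (\<Sum>x<N. x) + N = N * N"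
  by (induction N) (simp_all add: algebra_simps)

lemma count_carries:
  fixes N :: nat
  shows "2 * (\<Sum>a<N. \<Sum>b<N. \<Sum>x<N. of_bool (N \<le> a + x)) + N * N = N * N * N"
proof -
  have "(\<Sum>a<N. \<Sum>b<N. \<Sum>x<N. of_bool (N \<le> a + x)) = N * (\<Sum>a<N. \<Sum>x<N. of_bool (N \<le> a + x))"
    by (simp only: sum_constant card_lessThan of_nat_id sum_distrib_left)
  also have "\<dots> = N * (\<Sum>x<N. \<Sum>a<N. of_bool (N \<le> a + x))"
    by (subst sum.swap) (rule refl)
  also have "\<dots> = N * (\<Sum>x<N. x)"
    by (intro arg_cong[where f="(*) N"] sum.cong) (simp_all add: carry_column_card)
  finally have "2 * (\<Sum>a<N. \<Sum>b<N. \<Sum>x<N. of_bool (N \<le> a + x)) + N * N = N * (2 * (\<Sum>x<N. x) + N)"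
    by (simp add: algebra_simps)
  then show ?thesis
    by (simp only: gauss_sum_double mult.assoc)
qed

lemma count_agreements:
  fixes N :: nat
  shows "3 * (\<Sum>a<N. \<Sum>b<N. \<Sum>x<N. of_bool ((N \<le> a + x) = (N \<le> b + x))) = N * (2 * N * N + 1)"
proof -
  have "(\<Sum>a<N. \<Sum>b<N. \<Sum>x<N. of_bool ((N \<le> a + x) = (N \<le> b + x)))
      = (\<Sum>x<N. \<Sum>a<N. \<Sum>b<N. of_bool ((N \<le> a + x) = (N \<le> b + x)))"
    by (subst sum.swap, subst (2) sum.swap) (rule refl)
  also have "\<dots> = (\<Sum>x<N. x ^ 2 + (N - x) ^ 2)"
  proof (rule sum.cong[OF refl])
    fix x assume "x \<in> {..<N}"
    then show "(\<Sum>a<N. \<Sum>b<N. of_bool ((N \<le> a + x) = (N \<le> b + x))) = x ^ 2 + (N - x) ^ 2"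
      using count_agreements_pair[of "{..<N}" "\<lambda>a. N \<le> a + x"] carry_column_card[of x N]
      by simp
  qed
  also have "(\<Sum>x<N. (N - x) ^ 2) = (\<Sum>x<N. (x + 1) ^ 2)"
    using sum.nat_diff_reindex[of "\<lambda>k. (k + 1) ^ 2" N] by (simp add: Suc_diff_Suc)
  then have "(\<Sum>x<N. x ^ 2 + (N - x) ^ 2) = (\<Sum>x<N. x ^ 2 + (x + 1) ^ 2)"
    by (simp add: sum.distrib)
  finally show ?thesis
    using sum_squares_consecutive[of N] by simp
qed

lemma pair_pmf_of_set:
  assumes "finite A" "A \<noteq> {}" "finite B" "B \<noteq> {}"
  shows "pair_pmf (pmf_of_set A) (pmf_of_set B) = pmf_of_set (A \<times> B)"
proof (rule pmf_eqI)
  fix z :: "'a \<times> 'b"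
  show "pmf (pair_pmf (pmf_of_set A) (pmf_of_set B)) z = pmf (pmf_of_set (A \<times> B)) z"
    using assms by (cases z) (simp add: pmf_pair card_cartesian_product indicator_def)
qed

(* The low i bits of a uniform n-bit word are uniform on i bits: a is in bijection
   with the pair (a div 2^i, a mod 2^i), and the second component is uniform. *)
lemma unif_low_bits:
  assumes "i \<le> n"
  shows "map_pmf (\<lambda>a. a mod 2 ^ i) (unif n) = unif i"
proof -
  define hi_lo where "hi_lo a = (a div 2 ^ i, a mod 2 ^ i)" for a :: nat
  have two_pow_n: "(2::nat) ^ n = 2 ^ (n - i) * 2 ^ i"
    using assms by (simp add: power_add[symmetric])
  have "inj_on hi_lo {..<2 ^ n}"
    by (rule inj_onI) (metis hi_lo_def prod.inject div_mult_mod_eq)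
  moreover have "hi_lo ` {..<2 ^ n} = {..<2 ^ (n - i)} \<times> {..<2 ^ i}"
  proof
    show "hi_lo ` {..<2 ^ n} \<subseteq> {..<2 ^ (n - i)} \<times> {..<2 ^ i}"
      by (auto simp: hi_lo_def two_pow_n less_mult_imp_div_less)
    show "{..<2 ^ (n - i)} \<times> {..<2 ^ i} \<subseteq> hi_lo ` {..<2 ^ n}"
    proof clarify
      fix q r :: nat
      assume q: "q < 2 ^ (n - i)" and r: "r < 2 ^ i"
      have "q * 2 ^ i + r < (q + 1) * 2 ^ i" using r by simp
      also have "\<dots> \<le> 2 ^ n" unfolding two_pow_n using q by (intro mult_right_mono) simp_all
      finally have "q * 2 ^ i + r \<in> {..<2 ^ n}" by simp
      moreover have "hi_lo (q * 2 ^ i + r) = (q, r)" using r by (simp add: hi_lo_def)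
      ultimately show "(q, r) \<in> hi_lo ` {..<2 ^ n}" by (metis image_eqI)
    qed
  qed
  ultimately have "map_pmf hi_lo (unif n) = pair_pmf (unif (n - i)) (unif i)"
    unfolding unif_def atLeast0LessThan
    by (simp add: map_pmf_of_set_inj pair_pmf_of_set lessThan_empty_iff)
  then have "map_pmf snd (map_pmf hi_lo (unif n)) = unif i"
    by (simp only: map_snd_pair_pmf)
  then show ?thesis
    by (simp add: pmf.map_comp comp_def hi_lo_def)
qed

lemma prob_low_bits:
  assumes "i \<le> n"
  shows "measure_pmf.prob (pair_pmf (unif n) (pair_pmf (unif n) (unif n)))
           {(a, b, x). P (a mod 2 ^ i) (b mod 2 ^ i) (x mod 2 ^ i)}
       = measure_pmf.prob (pair_pmf (unif i) (pair_pmf (unif i) (unif i))) {(a, b, x). P a b x}"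
proof -
  define low where "low a = a mod 2 ^ i" for a :: nat
  have "map_pmf (map_prod low (map_prod low low)) (pair_pmf (unif n) (pair_pmf (unif n) (unif n)))
      = pair_pmf (unif i) (pair_pmf (unif i) (unif i))"
    unfolding map_prod_def map_pair low_def unif_low_bits[OF assms] ..
  moreover have "{(a, b, x). P (a mod 2 ^ i) (b mod 2 ^ i) (x mod 2 ^ i)}
      = map_prod low (map_prod low low) -` {(a, b, x). P a b x}"
    by (auto simp: low_def)
  ultimately show ?thesis
    by (metis measure_map_pmf)
qed

lemma prob_unif_count:
  "measure_pmf.prob (pair_pmf (unif i) (pair_pmf (unif i) (unif i))) {(a, b, x). P a b x}
     = real (\<Sum>a<2 ^ i. \<Sum>b<2 ^ i. \<Sum>x<2 ^ i. of_bool (P a b x)) / 8 ^ i"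
proof -
  let ?A = "{..<(2::nat) ^ i}"
  have A: "finite ?A" "?A \<noteq> {}" by (simp_all add: lessThan_empty_iff)
  have "pair_pmf (unif i) (pair_pmf (unif i) (unif i)) = pmf_of_set (?A \<times> ?A \<times> ?A)"
    using A unfolding unif_def atLeast0LessThan by (simp add: pair_pmf_of_set)
  moreover have "card (?A \<times> ?A \<times> ?A \<inter> {(a, b, x). P a b x}) = (\<Sum>a\<in>?A. \<Sum>b\<in>?A. \<Sum>x\<in>?A. of_bool (P a b x))"
  proof -
    have "card (?A \<times> ?A \<times> ?A \<inter> {(a, b, x). P a b x})
        = (\<Sum>z\<in>?A \<times> ?A \<times> ?A \<inter> {(a, b, x). P a b x}. 1)"
      by simp
    also have "\<dots> = (\<Sum>z\<in>?A \<times> ?A \<times> ?A. if z \<in> {(a, b, x). P a b x} then 1 else 0)"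
      by (intro sum.inter_restrict) simp
    also have "\<dots> = (\<Sum>a\<in>?A. \<Sum>b\<in>?A. \<Sum>x\<in>?A. if P a b x then 1 else 0)"
      by (simp add: sum.cartesian_product case_prod_beta)
    finally show ?thesis
      by (simp only: of_bool_def)
  qed
  moreover have "card (?A \<times> ?A \<times> ?A) = 8 ^ i"
    by (simp add: card_cartesian_product power_mult_distrib[symmetric])
  ultimately show ?thesis
    using A by (simp add: measure_pmf_of_set)
qed

lemma eight_power: "(8::real) ^ i = (2 ^ i) ^ 3"
  by (simp add: power3_eq_cube power_mult_distrib[symmetric])

lemma ratio_carries:
  fixes c r :: real
  assumes "r > 0" "2 * c + r * r = r * r * r"
  shows "c / r ^ 3 = (r - 1) / (2 * r)"
proof -
  have "c = r * r * (r - 1) / 2" using assms(2) by (simp add: algebra_simps)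
  then show ?thesis using assms(1) by (simp add: field_simps power3_eq_cube)
qed

lemma ratio_agreements:
  fixes c r :: real
  assumes "r > 0" "3 * c = r * (2 * r * r + 1)"
  shows "c / r ^ 3 = 2 / 3 + 1 / (3 * r ^ 2)"
proof -
  have "c = r * (2 * r * r + 1) / 3" using assms(2) by simp
  then show ?thesis using assms(1) by (simp add: field_simps power3_eq_cube power2_eq_square)
qed

lemma prob_carry:
  assumes "i \<le> n"
  shows "measure_pmf.prob (pair_pmf (unif n) (pair_pmf (unif n) (unif n))) {(a, b, x). carry a x i}
       = (2 ^ i - 1) / 2 ^ (i + 1)"
proof -
  let ?N = "2 ^ i :: nat"
  let ?C = "\<Sum>a<?N. \<Sum>b<?N. \<Sum>x<?N. of_bool (?N \<le> a + x) :: nat"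
  have "measure_pmf.prob (pair_pmf (unif n) (pair_pmf (unif n) (unif n))) {(a, b, x). carry a x i}
      = real ?C / 8 ^ i"
    using prob_low_bits[OF assms, of "\<lambda>a b x. ?N \<le> a + x"]
    by (simp only: carry_iff_low_sum prob_unif_count)
  also have "\<dots> = (2 ^ i - 1) / (2 * 2 ^ i)"
  proof -
    have "2 * real ?C + 2 ^ i * 2 ^ i = 2 ^ i * 2 ^ i * 2 ^ i"
      using arg_cong[where f = real, OF count_carries[of ?N]]
      by (simp only: of_nat_add of_nat_mult of_nat_numeral of_nat_power)
    then show ?thesis
      unfolding eight_power by (intro ratio_carries) simp_all
  qed
  finally show ?thesis
    by simp
qed

lemma prob_ytilde_bit_zero:
  assumes "i < n"
  shows "measure_pmf.prob (pair_pmf (unif n) (pair_pmf (unif n) (unif n))) {(a, b, x). \<not> bit (ytilde n a b x) i}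
       = 2 / 3 + 1 / (3 * 4 ^ i)"
proof -
  let ?N = "2 ^ i :: nat"
  let ?C = "\<Sum>a<?N. \<Sum>b<?N. \<Sum>x<?N. of_bool ((?N \<le> a + x) = (?N \<le> b + x)) :: nat"
  have "measure_pmf.prob (pair_pmf (unif n) (pair_pmf (unif n) (unif n))) {(a, b, x). \<not> bit (ytilde n a b x) i}
      = real ?C / 8 ^ i"
    using prob_low_bits[of i n "\<lambda>a b x. (?N \<le> a + x) = (?N \<le> b + x)"] assms
    by (simp only: bit_ytilde carry_iff_low_sum prob_unif_count not_not less_imp_le)
  also have "\<dots> = 2 / 3 + 1 / (3 * (2 ^ i) ^ 2)"
  proof -
    have "3 * real ?C = 2 ^ i * (2 * 2 ^ i * 2 ^ i + 1)"
      using arg_cong[where f = real, OF count_agreements[of ?N]]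
      by (simp only: of_nat_1 of_nat_add of_nat_mult of_nat_numeral of_nat_power)
    then show ?thesis
      unfolding eight_power by (intro ratio_agreements) simp_all
  qed
  finally show ?thesis
    by (simp add: power_mult_distrib[symmetric] power2_eq_square)
qed

theorem mainTheorem6:
  fixes n i :: nat
  assumes "n \<ge> 2" and "i < n"
  defines "M \<equiv> pair_pmf (unif n) (pair_pmf (unif n) (unif n))"
  shows "measure_pmf.prob M {(a, b, x). carry a x i} = (2 ^ i - 1) / 2 ^ (i + 1)
       \<and> measure_pmf.prob M {(a, b, x). \<not> bit (ytilde n a b x) i}
           = 2 / 3 + 1 / (3 * 4 ^ i)"
proof
  show "measure_pmf.prob M {(a, b, x). carry a x i} = (2 ^ i - 1) / 2 ^ (i + 1)"
    unfolding M_def using assms(2) by (intro prob_carry) simp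
  show "measure_pmf.prob M {(a, b, x). \<not> bit (ytilde n a b x) i} = 2 / 3 + 1 / (3 * 4 ^ i)"
    unfolding M_def using assms(2) by (rule prob_ytilde_bit_zero)
qed

end
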